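(* Under the hypotheses of the conservation lemma (i.e. $(p^*,q^* )\in(0,1)^2$ maximizes $\ell(p,q,K)$ over $[0,1]^2$ with finite value), with $g(x)=p^*K(x)+q^*(1-K(x))$ we have $g(x)\in[\frac{1}{|B|},1]$ for every $x\in M$ and $g(x)\in[0,\frac{|B|-1}{|B|}]$ for every $x\in B\setminus M$.
   Context: $B\subset\mathbb{R}^d$ finite nonempty, $m:B\to\{0,1\}$, $M=\{x\in B:m(x)=1\}$. For $p,q\in[0,1]$ and $K:B\to[0,1]$, $g(x)=pK(x)+q(1-K(x))$ and $\ell(p,q,K)=\frac{1}{|B|}\big(\sum_{x\in M}\log g(x)+\sum_{x\in B\setminus M}\log(1-g(x))\big)$, with $\log 0=-\infty$. *)

theory Defs
  imports "HOL-Analysis.Analysis"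
begin

text \<open>Logarithm with the convention log 0 = -infinity (only applied to values in [0,1]).\<close>
definition elog :: "real \<Rightarrow> ereal" where
  "elog y = (if y > 0 then ereal (ln y) else -\<infinity>)"

definition gfun :: "real \<Rightarrow> real \<Rightarrow> ('a \<Rightarrow> real) \<Rightarrow> 'a \<Rightarrow> real" where
  "gfun p q K x = p * K x + q * (1 - K x)"

definition ell :: "'a set \<Rightarrow> ('a \<Rightarrow> nat) \<Rightarrow> real \<Rightarrow> real \<Rightarrow> ('a \<Rightarrow> real) \<Rightarrow> ereal" where
  "ell B m p q K =
     ereal (1 / real (card B)) *
       ((\<Sum>x\<in>{x\<in>B. m x = 1}. elog (gfun p q K x)) +
        (\<Sum>x\<in>B - {x\<in>B. m x = 1}. elog (1 - gfun p q K x)))"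

end

theory Submission
  imports Defs
begin

text \<open>Since p* and q* lie in (0,1), so does every g(x); hence the log-likelihood is finite and
  smooth near the maximiser. Moving along the ray t (p*, q*) multiplies every g(x) by t, and
  stationarity at t = 1 gives that the sum of g/(1 - g) over B - M equals |M|. Moving along
  (1,1) - t (1 - p*, 1 - q*) multiplies every 1 - g(x) by t and gives
  that the sum of (1 - g)/g over M equals |B - M|. A single term of either odds sum is therefore at
  most |B| - 1, which bounds g(x), respectively 1 - g(x), by (|B| - 1)/|B|.\<close>

lemma gfun_in_open_unit:
  assumes "0 < p" "p < 1" "0 < q" "q < 1" "0 \<le> K x" "K x \<le> 1"
  shows "0 < gfun p q K x \<and> gfun p q K x < 1"
proof -
  have "min p q * K x + min p q * (1 - K x) \<le> gfun p q K x"
    "gfun p q K x \<le> max p q * K x + max p q * (1 - K x)"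
    unfolding gfun_def using assms(5,6) by (intro add_mono mult_right_mono; simp)+
  then show ?thesis using assms(1-4) by (simp add: algebra_simps min_def max_def split: if_splits)
qed

lemma gfun_scale: "gfun (t * p) (t * q) K x = t * gfun p q K x"
  unfolding gfun_def by (simp add: algebra_simps)

lemma gfun_scale_complement:
  "gfun (1 - t * (1 - p)) (1 - t * (1 - q)) K x = 1 - t * (1 - gfun p q K x)"
  unfolding gfun_def by (simp add: algebra_simps)

lemma scaled_in_open_unit:
  fixes p t :: real
  assumes "0 < p" "p < 1" "\<bar>1 - t\<bar> < 1 - p"
  shows "0 < t * p \<and> t * p < 1"
proof -
  have "t * p \<le> (2 - p) * p" using assms by (intro mult_right_mono) auto
  also have "\<dots> = 1 - (1 - p)\<^sup>2" by (simp add: power2_eq_square algebra_simps)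
  also have "\<dots> < 1" using assms by simp
  finally show ?thesis using assms by simp
qed

definition loglik :: "'a set \<Rightarrow> ('a \<Rightarrow> nat) \<Rightarrow> real \<Rightarrow> real \<Rightarrow> ('a \<Rightarrow> real) \<Rightarrow> real" where
  "loglik B m p q K = (\<Sum>x\<in>{x\<in>B. m x = 1}. ln (gfun p q K x)) +
     (\<Sum>x\<in>B - {x\<in>B. m x = 1}. ln (1 - gfun p q K x))"

lemma ell_eq_loglik:
  assumes "\<forall>x\<in>B. 0 < gfun p q K x \<and> gfun p q K x < 1"
  shows "ell B m p q K = ereal (loglik B m p q K / real (card B))"
proof -
  have "(\<Sum>x\<in>{x\<in>B. m x = 1}. elog (gfun p q K x)) =
        (\<Sum>x\<in>{x\<in>B. m x = 1}. ereal (ln (gfun p q K x)))"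
   and "(\<Sum>x\<in>B - {x\<in>B. m x = 1}. elog (1 - gfun p q K x)) =
        (\<Sum>x\<in>B - {x\<in>B. m x = 1}. ereal (ln (1 - gfun p q K x)))"
    using assms by (auto intro!: sum.cong simp: elog_def)
  then show ?thesis unfolding ell_def loglik_def by simp
qed

lemma log_scaling_stationary:
  fixes a :: "'a \<Rightarrow> real"
  assumes "finite A" "finite C"
    and "\<forall>x\<in>A. 0 < a x" "\<forall>x\<in>C. a x < 1"
    and "0 < d"
    and "\<forall>t. \<bar>1 - t\<bar> < d \<longrightarrow>
           (\<Sum>x\<in>A. ln (t * a x)) + (\<Sum>x\<in>C. ln (1 - t * a x)) \<le>
           (\<Sum>x\<in>A. ln (a x)) + (\<Sum>x\<in>C. ln (1 - a x))"
  shows "(\<Sum>x\<in>C. a x / (1 - a x)) = real (card A)"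
proof -
  define F where "F t = (\<Sum>x\<in>A. ln (t * a x)) + (\<Sum>x\<in>C. ln (1 - t * a x))" for t
  have "DERIV F 1 :> (\<Sum>x\<in>A. 1) + (\<Sum>x\<in>C. - a x / (1 - a x))"
    unfolding F_def
  proof (intro derivative_intros DERIV_sum)
    fix x assume "x \<in> A"
    then show "((\<lambda>t. ln (t * a x)) has_field_derivative 1) (at 1)"
      using assms(3) by (auto intro!: derivative_eq_intros)
  next
    fix x assume "x \<in> C"
    then show "((\<lambda>t. ln (1 - t * a x)) has_field_derivative - a x / (1 - a x)) (at 1)"
      using assms(4) by (auto intro!: derivative_eq_intros simp: divide_simps)
  qed
  moreover have "\<forall>t. \<bar>1 - t\<bar> < d \<longrightarrow> F t \<le> F 1"
    using assms(6) by (simp add: F_def)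
  ultimately have "(\<Sum>x\<in>A. 1) + (\<Sum>x\<in>C. - a x / (1 - a x)) = 0"
    using DERIV_local_max \<open>0 < d\<close> by blast
  then show ?thesis by (simp add: sum_negf)
qed

lemma odds_sum_bound:
  fixes a :: "'a \<Rightarrow> real" and r :: real
  assumes "finite S" "x \<in> S" "\<forall>y\<in>S. 0 \<le> a y \<and> a y < 1"
    and "(\<Sum>y\<in>S. a y / (1 - a y)) \<le> r"
  shows "a x \<le> r / (r + 1)"
proof -
  have "a x / (1 - a x) \<le> (\<Sum>y\<in>S. a y / (1 - a y))"
    using assms(1-3) by (intro member_le_sum) auto
  with assms(4) have odds_le: "a x / (1 - a x) \<le> r" by linarith
  have "0 \<le> a x" "a x < 1" using assms(2,3) by auto
  then have "0 \<le> r" using odds_le divide_nonneg_nonneg[of "a x" "1 - a x"] by linarith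
  have "a x \<le> r * (1 - a x)" using odds_le \<open>a x < 1\<close> by (simp add: pos_divide_le_eq)
  then have "a x * (r + 1) \<le> r" by (simp add: algebra_simps)
  then show ?thesis using \<open>0 \<le> r\<close> by (simp add: pos_le_divide_eq)
qed

lemma loglik_max_odds_identities:
  fixes B :: "'a set" and m :: "'a \<Rightarrow> nat"
  defines "M \<equiv> {x\<in>B. m x = 1}"
  assumes "finite B" "\<forall>x\<in>B. K x \<in> {0..1}"
    and ps: "0 < ps" "ps < 1" and qs: "0 < qs" "qs < 1"
    and max: "\<And>p q. \<lbrakk>0 < p; p < 1; 0 < q; q < 1\<rbrakk> \<Longrightarrow> loglik B m p q K \<le> loglik B m ps qs K"
  shows "(\<Sum>x\<in>B - M. gfun ps qs K x / (1 - gfun ps qs K x)) = real (card M)"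
    and "(\<Sum>x\<in>M. (1 - gfun ps qs K x) / gfun ps qs K x) = real (card (B - M))"
proof -
  let ?g = "gfun ps qs K"
  have g: "\<forall>x\<in>B. 0 < ?g x \<and> ?g x < 1"
    using assms(3) gfun_in_open_unit[OF ps qs, of K] by auto
  have fin: "finite M" "finite (B - M)" using assms(2) by (auto simp: M_def)
  show "(\<Sum>x\<in>B - M. ?g x / (1 - ?g x)) = real (card M)"
  proof (rule log_scaling_stationary[OF fin])
    show "0 < min (1 - ps) (1 - qs)" using ps qs by simp
    show "\<forall>t. \<bar>1 - t\<bar> < min (1 - ps) (1 - qs) \<longrightarrow>
      (\<Sum>x\<in>M. ln (t * ?g x)) + (\<Sum>x\<in>B - M. ln (1 - t * ?g x)) \<le>
      (\<Sum>x\<in>M. ln (?g x)) + (\<Sum>x\<in>B - M. ln (1 - ?g x))"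
      (is "\<forall>t. _ \<longrightarrow> ?L t \<le> ?R")
    proof (intro allI impI)
      fix t assume "\<bar>1 - t\<bar> < min (1 - ps) (1 - qs)"
      then have "0 < t * ps" "t * ps < 1" "0 < t * qs" "t * qs < 1"
        using scaled_in_open_unit[OF ps] scaled_in_open_unit[OF qs] by auto
      from max[OF this] show "?L t \<le> ?R"
        by (simp add: loglik_def M_def gfun_scale)
    qed
  qed (use g in \<open>auto simp: M_def\<close>)
  have "(\<Sum>x\<in>M. (1 - ?g x) / (1 - (1 - ?g x))) = real (card (B - M))"
  proof (rule log_scaling_stationary[OF fin(2,1)])
    show "0 < min ps qs" using ps qs by simp
    have "0 < 1 - ps" "1 - ps < 1" "0 < 1 - qs" "1 - qs < 1" using ps qs by auto
    note scaled = scaled_in_open_unit[OF this(1,2)] scaled_in_open_unit[OF this(3,4)]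
    show "\<forall>t. \<bar>1 - t\<bar> < min ps qs \<longrightarrow>
      (\<Sum>x\<in>B - M. ln (t * (1 - ?g x))) + (\<Sum>x\<in>M. ln (1 - t * (1 - ?g x))) \<le>
      (\<Sum>x\<in>B - M. ln (1 - ?g x)) + (\<Sum>x\<in>M. ln (1 - (1 - ?g x)))"
      (is "\<forall>t. _ \<longrightarrow> ?L t \<le> ?R")
    proof (intro allI impI)
      fix t assume "\<bar>1 - t\<bar> < min ps qs"
      then have "0 < 1 - t * (1 - ps)" "1 - t * (1 - ps) < 1"
        "0 < 1 - t * (1 - qs)" "1 - t * (1 - qs) < 1"
        using scaled[of t] by auto
      from max[OF this] show "?L t \<le> ?R"
        by (simp add: loglik_def M_def gfun_scale_complement add.commute)
    qed
  qed (use g in \<open>auto simp: M_def\<close>)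
  then show "(\<Sum>x\<in>M. (1 - ?g x) / ?g x) = real (card (B - M))" by simp
qed

lemma ell_max_imp_loglik_max:
  assumes "finite B" "B \<noteq> {}" "\<forall>x\<in>B. K x \<in> {0..1}"
    and ps: "0 < ps" "ps < 1" and qs: "0 < qs" "qs < 1"
    and "\<forall>p\<in>{0..1}. \<forall>q\<in>{0..1}. ell B m p q K \<le> ell B m ps qs K"
    and pq: "0 < p" "p < 1" "0 < q" "q < 1"
  shows "loglik B m p q K \<le> loglik B m ps qs K"
proof -
  have open_unit: "\<forall>x\<in>B. 0 < gfun p' q' K x \<and> gfun p' q' K x < 1"
    if "0 < p'" "p' < 1" "0 < q'" "q' < 1" for p' q'
    using assms(3) gfun_in_open_unit[OF that, of K] by auto
  have "ell B m p q K \<le> ell B m ps qs K" using assms(8) pq by simp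
  then have "loglik B m p q K / real (card B) \<le> loglik B m ps qs K / real (card B)"
    by (simp add: ell_eq_loglik open_unit ps qs pq)
  moreover have "0 < real (card B)" using assms(1,2) by (simp add: card_gt_0_iff)
  ultimately show ?thesis by (simp add: divide_le_cancel)
qed

lemma card_le_card_minus_one:
  assumes "finite B" "x \<in> B" "S \<subseteq> B - {x}"
  shows "real (card S) \<le> real (card B) - 1"
proof -
  have "card S \<le> card (B - {x})" using assms by (intro card_mono) auto
  also have "card (B - {x}) + 1 = card B" using assms(1,2) by (metis Suc_eq_plus1 card_Suc_Diff1)
  finally have "real (card S) + 1 \<le> real (card B)" by linarith
  then show ?thesis by simp
qed

theorem lemmaA2:
  fixes B :: "(real ^ 'd) set" and m :: "real ^ 'd \<Rightarrow> nat"
    and K :: "real ^ 'd \<Rightarrow> real" and ps qs :: real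
  assumes "finite B" and "B \<noteq> {}"
    and "\<forall>x\<in>B. m x \<in> {0, 1}"
    and "\<forall>x\<in>B. K x \<in> {0..1}"
    and "ps \<in> {0<..<1}" and "qs \<in> {0<..<1}"
    and "\<forall>p\<in>{0..1}. \<forall>q\<in>{0..1}. ell B m p q K \<le> ell B m ps qs K"
    and "\<bar>ell B m ps qs K\<bar> \<noteq> \<infinity>"
  shows "(\<forall>x\<in>{x\<in>B. m x = 1}. gfun ps qs K x \<in> {1 / real (card B)..1}) \<and>
         (\<forall>x\<in>B - {x\<in>B. m x = 1}. gfun ps qs K x \<in> {0..(real (card B) - 1) / real (card B)})"
proof -
  let ?M = "{x\<in>B. m x = 1}" and ?g = "gfun ps qs K" and ?n = "real (card B)"
  have ps: "0 < ps" "ps < 1" and qs: "0 < qs" "qs < 1" using assms(5,6) by auto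
  have g: "\<forall>x\<in>B. 0 < ?g x \<and> ?g x < 1"
    using assms(4) gfun_in_open_unit[OF ps qs, of K] by auto
  have "0 < ?n" using assms(1,2) by (simp add: card_gt_0_iff)
  note odds = loglik_max_odds_identities[OF assms(1,4) ps qs
      ell_max_imp_loglik_max[OF assms(1,2,4) ps qs assms(7)]]
  have "1 - ?g x \<le> (?n - 1) / (?n - 1 + 1)" if "x \<in> ?M" for x
  proof (rule odds_sum_bound[of ?M])
    show "(\<Sum>y\<in>?M. (1 - ?g y) / (1 - (1 - ?g y))) \<le> ?n - 1"
      using odds(2) card_le_card_minus_one[OF assms(1), of x "B - ?M"] that by auto
  qed (use that assms(1) g in auto)
  moreover have "?g x \<le> (?n - 1) / (?n - 1 + 1)" if "x \<in> B - ?M" for x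
  proof (rule odds_sum_bound[of "B - ?M"])
    show "(\<Sum>y\<in>B - ?M. ?g y / (1 - ?g y)) \<le> ?n - 1"
      using odds(1) card_le_card_minus_one[OF assms(1), of x ?M] that by auto
  qed (use that assms(1) g in auto)
  ultimately show ?thesis
    using g \<open>0 < ?n\<close> by (auto simp: field_simps)
qed

end
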